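(* For all sufficiently large $n$, the modified multi-phase process described in the context returns an element of $S^-_{3/4}$ with probability at least $1-2^{-n/5}$.
   Context: Let $n\ge2$ be an integer such that $m=n/\log_2 n$ is an integer, and let $S'$ be a set of $m$ distinct elements of a totally ordered set. For $\rho\in(0,1]$, $S^-_\rho$ denotes the set of the $\lceil \rho m\rceil$ smallest elements of $S'$ and $S^+_\rho=S'\setminus S^-_\rho$. There are two oracles $\mathcal{O}_1,\mathcal{O}_2$ which can be queried with an element $x\in S'$ and answer "relevant" or "not relevant" in constant time, all answers being mutually independent; for constants $p_1,p_2\in[0,\tfrac12)$: $\mathcal{O}_1$ reports $x$ relevant with probability at least $1-p_1$ if $x\in S^-_{1/6}$ and at most $p_1$ if $x\in S^+_{1/3}$; $\mathcal{O}_2$ reports $x$ relevant with probability at least $1-p_2$ if $x\in S^-_{1/3}$ and at most $p_2$ if $x\in S^+_{3/4}$. For $q\in[0,\tfrac12)$ let $c_q=\lceil 4(1-q)/(1-2q)^2\rceil$. Let $\eta = 1+\lceil \log_2 \frac{n}{\log_2 n}\rceil$. Modified multi-phase process: the elements of $S'$ are considered one at a time. For the current element $x$, a preliminary test is performed consisting of $8c_{p_1}\lceil \ln n\rceil+1$ queries to $\mathcal{O}_1$ on $x$; it is passed if the majority report $x$ relevant, otherwise $x$ is discarded and the next element is considered. Then, for $i=1,\dots,\eta$, the $i$-th test consists of $2\lceil 2^i\ln n\rceil c_{p_2}+1$ queries to $\mathcal{O}_2$ on $x$ and is passed if the majority report $x$ relevant; if $x$ fails a test it is discarded and the next element is considered.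 The process returns the first element that passes the $\eta$-th test (if no element does, it returns nothing, which counts as not returning an element of $S^-_{3/4}$). Here $\ln$ is the natural logarithm. *)

theory Defs
  imports "HOL-Probability.Probability"
begin

text \<open>S^-_rho: the ceil(rho m) smallest elements of S (m = card S); S^+_rho its complement in S.\<close>
definition Sminus :: "real \<Rightarrow> 'a::linorder set \<Rightarrow> 'a set" where
  "Sminus \<rho> S = {x\<in>S. card {y\<in>S. y < x} < nat \<lceil>\<rho> * real (card S)\<rceil>}"

definition Splus :: "real \<Rightarrow> 'a::linorder set \<Rightarrow> 'a set" where
  "Splus \<rho> S = S - Sminus \<rho> S"

definition cq :: "real \<Rightarrow> nat" where
  "cq q = nat \<lceil>4 * (1 - q) / (1 - 2 * q)^2\<rceil>"

definition maj_test :: "nat \<Rightarrow> real \<Rightarrow> bool pmf" where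
  "maj_test k p = map_pmf (\<lambda>c. k < 2 * c) (binomial_pmf k p)"

fun run_tests :: "(nat \<times> real) list \<Rightarrow> bool pmf" where
  "run_tests [] = return_pmf True"
| "run_tests ((k, p) # ts) = maj_test k p \<bind> (\<lambda>b. if b then run_tests ts else return_pmf False)"

fun multi_phase :: "('a \<Rightarrow> (nat \<times> real) list) \<Rightarrow> 'a list \<Rightarrow> 'a option pmf" where
  "multi_phase T [] = return_pmf None"
| "multi_phase T (x # xs) = run_tests (T x) \<bind> (\<lambda>b. if b then return_pmf (Some x) else multi_phase T xs)"

definition prelim_size :: "nat \<Rightarrow> real \<Rightarrow> nat" where
  "prelim_size n p1 = 8 * cq p1 * nat \<lceil>ln (real n)\<rceil> + 1"

definition phase_size :: "nat \<Rightarrow> real \<Rightarrow> nat \<Rightarrow> nat" where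
  "phase_size n p2 i = 2 * nat \<lceil>2 ^ i * ln (real n)\<rceil> * cq p2 + 1"

definition eta :: "nat \<Rightarrow> nat" where
  "eta n = 1 + nat \<lceil>log 2 (real n / log 2 (real n))\<rceil>"

text \<open>Tests for element x: preliminary test with O1 (probability a1 x), then tests 1..eta with O2.\<close>
definition mod_tests :: "nat \<Rightarrow> real \<Rightarrow> real \<Rightarrow> ('a \<Rightarrow> real) \<Rightarrow> ('a \<Rightarrow> real) \<Rightarrow> 'a \<Rightarrow> (nat \<times> real) list" where
  "mod_tests n p1 p2 a1 a2 x =
     (prelim_size n p1, a1 x) # map (\<lambda>i. (phase_size n p2 i, a2 x)) [1..<eta n + 1]"

end

theory Submission
  imports Defs "HOL-Real_Asymp.Real_Asymp"
begin

text \<open>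
  An element outside S^-_{3/4} is accepted only if it passes the last O2-test, which has about
  2^eta ln n >= 2 m ln n = 2 n ln 2 queries; by Hoeffding's inequality this happens with
  probability at most 2^(-4n). An element of S^-_{1/6} is rejected only if one of its eta + 1
  tests fails, which by Hoeffding and a union bound has probability at most
  n^(-8) + eta n^(-4) <= n^(-2). The process fails only if a bad element is accepted or every
  element of S^-_{1/6} is rejected, so it fails with probability at most
  m 2^(-4n) + (n^(-2))^(m/6) = m 2^(-4n) + 2^(-n/3), because n^m = 2^n.
\<close>

lemma maj_test_0: "p \<in> {0..1} \<Longrightarrow> maj_test 0 p = return_pmf False"
  by (simp add: maj_test_def binomial_pmf_0)

lemma pmf_maj_test_True_le:
  assumes "0 \<le> p" "p \<le> q" "q < 1/2"
  shows "pmf (maj_test k p) True \<le> exp (-2 * real k * (1/2 - q)\<^sup>2)"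
proof (cases "k = 0")
  case True
  then show ?thesis using assms by (simp add: maj_test_0)
next
  case False
  interpret binomial_distribution k p by unfold_locales (use assms in auto)
  have "pmf (maj_test k p) True = measure_pmf.prob (binomial_pmf k p) {c. k < 2 * c}"
    unfolding maj_test_def pmf_map by (simp add: vimage_def)
  also have "\<dots> \<le> measure_pmf.prob (binomial_pmf k p) {c. real c / real k \<ge> p + (1/2 - p)}"
    using False by (intro measure_pmf.finite_measure_mono) (auto simp: field_simps)
  also have "\<dots> \<le> exp (-2 * real k * (1/2 - p)\<^sup>2)"
    using prob_ge'[of "1/2 - p"] False assms by simp
  also have "\<dots> \<le> exp (-2 * real k * (1/2 - q)\<^sup>2)"
    using assms by (simp add: mult_left_mono power_mono)
  finally show ?thesis .
qed

lemma pmf_maj_test_False_le: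
  assumes "1 - q \<le> p" "p \<le> 1" "q < 1/2"
  shows "pmf (maj_test k p) False \<le> exp (-2 * real k * (1/2 - q)\<^sup>2)"
proof (cases "k = 0")
  case True
  then show ?thesis using assms by (simp add: maj_test_0)
next
  case False
  interpret binomial_distribution k p by unfold_locales (use assms in auto)
  have "pmf (maj_test k p) False = measure_pmf.prob (binomial_pmf k p) {c. \<not> k < 2 * c}"
    unfolding maj_test_def pmf_map by (simp add: vimage_def)
  also have "\<dots> \<le> measure_pmf.prob (binomial_pmf k p) {c. real c / real k \<le> p - (p - 1/2)}"
    using False by (intro measure_pmf.finite_measure_mono) (auto simp: field_simps)
  also have "\<dots> \<le> exp (-2 * real k * (p - 1/2)\<^sup>2)"
    using prob_le'[of "p - 1/2"] False assms by simp
  also have "\<dots> \<le> exp (-2 * real k * (1/2 - q)\<^sup>2)"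
    using assms by (simp add: mult_left_mono power_mono)
  finally show ?thesis .
qed

lemma cq_amplification:
  assumes "q < 1/2"
  shows "1 \<le> 2 * real (cq q) * (1/2 - q)\<^sup>2"
proof -
  have pos: "0 < (1 - 2 * q)\<^sup>2" using assms by simp
  have "4 * (1 - q) / (1 - 2 * q)\<^sup>2 \<le> real (cq q)"
    unfolding cq_def by linarith
  then have "4 * (1 - q) \<le> real (cq q) * (1 - 2 * q)\<^sup>2"
    using pos by (simp add: field_simps)
  then show ?thesis using assms by (simp add: power2_eq_square algebra_simps)
qed

lemma maj_test_exponent_ge:
  assumes "q < 1/2" "0 \<le> t" "real (cq q) * t \<le> real k"
  shows "t \<le> 2 * real k * (1/2 - q)\<^sup>2"
proof -
  have "t \<le> t * (2 * real (cq q) * (1/2 - q)\<^sup>2)"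
    using cq_amplification[OF assms(1)] assms(2) by (simp add: mult_le_cancel_left1)
  also have "\<dots> = 2 * (real (cq q) * t) * (1/2 - q)\<^sup>2" by simp
  also have "\<dots> \<le> 2 * real k * (1/2 - q)\<^sup>2"
    using assms(3) by (intro mult_right_mono) auto
  finally show ?thesis .
qed

lemma pmf_maj_test_True_le_powr:
  assumes "0 < n" "0 \<le> p" "p \<le> q" "q < 1/2" "0 \<le> c"
    and "real (cq q) * (c * ln (real n)) \<le> real k"
  shows "pmf (maj_test k p) True \<le> real n powr - c"
proof -
  have "pmf (maj_test k p) True \<le> exp (-2 * real k * (1/2 - q)\<^sup>2)"
    using assms by (intro pmf_maj_test_True_le)
  also have "\<dots> \<le> exp (- (c * ln (real n)))"
    using assms by (simp add: maj_test_exponent_ge)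
  also have "\<dots> = real n powr - c"
    using assms by (simp add: powr_def)
  finally show ?thesis .
qed

lemma pmf_maj_test_False_le_powr:
  assumes "0 < n" "1 - q \<le> p" "p \<le> 1" "q < 1/2" "0 \<le> c"
    and "real (cq q) * (c * ln (real n)) \<le> real k"
  shows "pmf (maj_test k p) False \<le> real n powr - c"
proof -
  have "pmf (maj_test k p) False \<le> exp (-2 * real k * (1/2 - q)\<^sup>2)"
    using assms by (intro pmf_maj_test_False_le)
  also have "\<dots> \<le> exp (- (c * ln (real n)))"
    using assms by (simp add: maj_test_exponent_ge)
  also have "\<dots> = real n powr - c"
    using assms by (simp add: powr_def)
  finally show ?thesis .
qed

lemma prelim_size_ge: "real (cq q) * (8 * ln (real n)) \<le> real (prelim_size n q)"
proof -
  have "real (cq q) * ln (real n) \<le> real (cq q) * real (nat \<lceil>ln (real n)\<rceil>)"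
    by (intro mult_left_mono) (auto, linarith)
  then show ?thesis unfolding prelim_size_def by simp
qed

lemma phase_size_ge: "real (cq q) * (2 ^ Suc i * ln (real n)) \<le> real (phase_size n q i)"
proof -
  have "real (cq q) * (2 ^ i * ln (real n)) \<le> real (cq q) * real (nat \<lceil>2 ^ i * ln (real n)\<rceil>)"
    by (intro mult_left_mono) (auto, linarith)
  then show ?thesis unfolding phase_size_def by (simp add: algebra_simps)
qed

lemma measure_pmf_bind_bool:
  fixes M :: "bool pmf"
  shows "measure_pmf.prob (M \<bind> f) X =
    pmf M True * measure_pmf.prob (f True) X + pmf M False * measure_pmf.prob (f False) X"
proof -
  have "measure_pmf.prob (M \<bind> f) X = (\<integral>b. measure_pmf.prob (f b) X \<partial>M)"
    unfolding measure_pmf_bind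
    by (rule measure_pmf.measure_bind[where N="count_space UNIV"])
      (auto simp: measure_pmf_in_subprob_algebra)
  also have "\<dots> = (\<Sum>b\<in>UNIV. measure_pmf.prob (f b) X * pmf M b)"
    by (rule integral_measure_pmf_real) auto
  finally show ?thesis by (simp add: UNIV_bool algebra_simps)
qed

lemma pmf_run_tests_Cons_True:
  "pmf (run_tests ((k, p) # ts)) True = pmf (maj_test k p) True * pmf (run_tests ts) True"
  using measure_pmf_bind_bool[of "maj_test k p" _ "{True}"] by (simp add: measure_pmf_single)

lemma pmf_run_tests_True_le:
  assumes "(k, p) \<in> set ts"
  shows "pmf (run_tests ts) True \<le> pmf (maj_test k p) True"
  using assms
proof (induction ts)
  case (Cons t ts)
  obtain k' p' where t: "t = (k', p')" by fastforce
  have "pmf (run_tests (t # ts)) True = pmf (maj_test k' p') True * pmf (run_tests ts) True"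
    unfolding t by (rule pmf_run_tests_Cons_True)
  moreover have "\<dots> \<le> pmf (maj_test k' p') True" "\<dots> \<le> pmf (run_tests ts) True"
    by (simp_all add: mult_left_le mult_left_le_one_le pmf_le_1)
  ultimately show ?case using Cons by (auto simp: t)
qed simp

lemma pmf_run_tests_False_le:
  "pmf (run_tests ts) False \<le> (\<Sum>(k, p)\<leftarrow>ts. pmf (maj_test k p) False)"
proof (induction ts)
  case (Cons t ts)
  obtain k p where t: "t = (k, p)" by fastforce
  define a where "a = pmf (maj_test k p) True"
  define b where "b = pmf (run_tests ts) True"
  have "0 \<le> (1 - a) * (1 - b)" by (simp add: a_def b_def pmf_le_1)
  then have "1 - a * b \<le> (1 - a) + (1 - b)" by (simp add: algebra_simps)
  moreover have "pmf (run_tests (t # ts)) True = a * b"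
    unfolding t a_def b_def by (rule pmf_run_tests_Cons_True)
  ultimately show ?case using Cons by (simp add: t pmf_False_conv_True a_def b_def)
qed simp

lemma measure_multi_phase_Cons:
  "measure_pmf.prob (multi_phase T (x # xs)) (Some ` A) =
     (if x \<in> A then pmf (run_tests (T x)) True else 0)
     + pmf (run_tests (T x)) False * measure_pmf.prob (multi_phase T xs) (Some ` A)"
  unfolding multi_phase.simps measure_pmf_bind_bool by (simp add: image_iff)

lemma multi_phase_failure_le:
  assumes "distinct xs" "G \<subseteq> A"
  shows "1 - measure_pmf.prob (multi_phase T xs) (Some ` A)
    \<le> (\<Sum>x\<in>set xs - A. pmf (run_tests (T x)) True) + (\<Prod>x\<in>set xs \<inter> G. pmf (run_tests (T x)) False)"
  using assms(1)
proof (induction xs)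
  case (Cons x xs)
  define f where "f = pmf (run_tests (T x)) True"
  define Q where "Q = 1 - measure_pmf.prob (multi_phase T xs) (Some ` A)"
  define S where "S = (\<Sum>x\<in>set xs - A. pmf (run_tests (T x)) True)"
  define P where "P = (\<Prod>x\<in>set xs \<inter> G. pmf (run_tests (T x)) False)"
  have IH: "Q \<le> S + P" using Cons unfolding Q_def S_def P_def by simp
  have "0 \<le> f" "f \<le> 1" "0 \<le> Q" "0 \<le> S"
    by (auto simp: f_def Q_def S_def pmf_le_1 sum_nonneg)
  then have "(1 - f) * Q \<le> Q" "(1 - f) * S \<le> S" "(1 - f) * Q \<le> (1 - f) * S + (1 - f) * P"
    using IH by (auto simp: mult_left_le_one_le simp flip: distrib_left intro: mult_left_mono)
  moreover have "1 - measure_pmf.prob (multi_phase T (x # xs)) (Some ` A)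
      = (if x \<in> A then 0 else f) + (1 - f) * Q"
    unfolding measure_multi_phase_Cons by (simp add: f_def Q_def pmf_False_conv_True algebra_simps)
  moreover have "(\<Sum>x\<in>set (x # xs) - A. pmf (run_tests (T x)) True) = (if x \<in> A then S else f + S)"
    using Cons.prems by (auto simp: S_def f_def insert_Diff_if)
  moreover have "(\<Prod>x\<in>set (x # xs) \<inter> G. pmf (run_tests (T x)) False) = (if x \<in> G then (1 - f) * P else P)"
    using Cons.prems by (simp add: P_def f_def pmf_False_conv_True)
  ultimately show ?case using IH assms(2) by auto
qed simp

lemma multi_phase_failure_le_uniform:
  assumes "distinct xs" "G \<subseteq> A" "G \<subseteq> set xs" "0 \<le> \<beta>"
    and "\<And>x. x \<in> set xs - A \<Longrightarrow> pmf (run_tests (T x)) True \<le> \<beta>"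
    and "\<And>x. x \<in> G \<Longrightarrow> pmf (run_tests (T x)) False \<le> \<gamma>"
  shows "1 - measure_pmf.prob (multi_phase T xs) (Some ` A) \<le> real (length xs) * \<beta> + \<gamma> ^ card G"
proof -
  have "(\<Sum>x\<in>set xs - A. pmf (run_tests (T x)) True) \<le> real (card (set xs - A)) * \<beta>"
    using assms(5) by (rule sum_bounded_above)
  also have "\<dots> \<le> real (length xs) * \<beta>"
  proof -
    have "card (set xs - A) \<le> length xs" by (meson Diff_subset card_mono card_length finite_set order_trans)
    then show ?thesis using assms(4) by (intro mult_right_mono) auto
  qed
  finally have bad: "(\<Sum>x\<in>set xs - A. pmf (run_tests (T x)) True) \<le> real (length xs) * \<beta>" .
  have "(\<Prod>x\<in>set xs \<inter> G. pmf (run_tests (T x)) False) = (\<Prod>x\<in>G. pmf (run_tests (T x)) False)"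
    using assms(3) by (simp add: Int_absorb1)
  also have "\<dots> \<le> (\<Prod>x\<in>G. \<gamma>)"
    using assms(6) by (intro prod_mono) auto
  finally have good: "(\<Prod>x\<in>set xs \<inter> G. pmf (run_tests (T x)) False) \<le> \<gamma> ^ card G"
    by simp
  from bad good multi_phase_failure_le[OF assms(1,2), of T] show ?thesis by linarith
qed

lemma bij_betw_rank:
  fixes S :: "'a::linorder set"
  assumes "finite S"
  shows "bij_betw (\<lambda>x. card {y\<in>S. y < x}) S {..<card S}"
proof -
  define r where "r x = card {y\<in>S. y < x}" for x
  have rank_less: "r x < r y" if "x \<in> S" "y \<in> S" "x < y" for x y
  proof -
    have "{z\<in>S. z < x} \<subset> {z\<in>S. z < y}" using that by auto
    then show ?thesis unfolding r_def using assms by (intro psubset_card_mono) auto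
  qed
  have "inj_on r S"
    by (metis (no_types, lifting) inj_onI linorder_neqE rank_less order_less_irrefl)
  moreover have "r ` S \<subseteq> {..<card S}"
  proof
    fix i assume "i \<in> r ` S"
    then obtain x where x: "x \<in> S" "i = r x" by auto
    have "{y\<in>S. y < x} \<subset> S" using x by auto
    then show "i \<in> {..<card S}" unfolding x r_def using assms by (auto intro: psubset_card_mono)
  qed
  ultimately have "r ` S = {..<card S}"
    by (intro card_subset_eq) (auto simp: card_image)
  with \<open>inj_on r S\<close> show ?thesis unfolding r_def bij_betw_def by simp
qed

lemma card_filter_rank:
  fixes S :: "'a::linorder set"
  assumes "finite S"
  shows "card {x\<in>S. card {y\<in>S. y < x} < K} = min (card S) K"
proof -
  define r where "r x = card {y\<in>S. y < x}" for x
  have bij: "bij_betw r S {..<card S}"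
    unfolding r_def using assms by (rule bij_betw_rank)
  have "r ` {x\<in>S. r x < K} = {i\<in>r ` S. i < K}" by auto
  also have "\<dots> = {..<min (card S) K}" using bij_betw_imp_surj_on[OF bij] by auto
  finally have "bij_betw r {x\<in>S. r x < K} {..<min (card S) K}"
    using bij by (rule bij_betw_subset[rotated 2]) auto
  then show ?thesis unfolding r_def by (simp add: bij_betw_same_card)
qed

lemma card_Sminus:
  fixes S :: "'a::linorder set"
  assumes "finite S"
  shows "card (Sminus \<rho> S) = min (card S) (nat \<lceil>\<rho> * real (card S)\<rceil>)"
  unfolding Sminus_def using assms by (rule card_filter_rank)

lemma Sminus_mono:
  assumes "\<rho> \<le> \<sigma>"
  shows "Sminus \<rho> S \<subseteq> Sminus \<sigma> S"
proof -
  have "nat \<lceil>\<rho> * real (card S)\<rceil> \<le> nat \<lceil>\<sigma> * real (card S)\<rceil>"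
    using assms by (intro nat_mono ceiling_mono mult_right_mono) auto
  then show ?thesis unfolding Sminus_def by (blast intro: order_less_le_trans)
qed

lemma eta_le:
  assumes "2 \<le> n"
  shows "real (eta n) \<le> 2 + log 2 (real n)"
proof -
  have log_ge_1: "1 \<le> log 2 (real n)" using assms by simp
  then have "log 2 (real n / log 2 (real n)) \<le> log 2 (real n)"
    using assms by (subst log_le_cancel_iff) (auto simp: divide_le_eq)
  then show ?thesis using log_ge_1 unfolding eta_def by linarith
qed

lemma two_pow_eta_ge:
  assumes "2 \<le> n"
  shows "2 * (real n / log 2 (real n)) \<le> 2 ^ eta n"
proof -
  define M where "M = real n / log 2 (real n)"
  have "0 < M" unfolding M_def using assms by simp
  then have "M = 2 powr (log 2 M)" by simp
  also have "\<dots> \<le> 2 powr (real (nat \<lceil>log 2 M\<rceil>))" by (intro powr_mono) (auto, linarith)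
  also have "\<dots> = 2 ^ nat \<lceil>log 2 M\<rceil>" by (simp add: powr_realpow)
  finally show ?thesis unfolding eta_def M_def by simp
qed

lemma powr_div_log2_self:
  assumes "2 \<le> n"
  shows "real n powr (real n / log 2 (real n)) = 2 powr real n"
  using assms by (simp add: powr_def log_def)

lemma powr_neg2_pow_le:
  assumes "2 \<le> n" "real n / log 2 (real n) / 6 \<le> real c"
  shows "(real n powr -2) ^ c \<le> 2 powr (- real n / 3)"
proof -
  have "(real n powr -2) ^ c = real n powr (-2 * real c)"
    using assms(1) by (simp add: powr_power mult.commute)
  also have "\<dots> \<le> real n powr ((real n / log 2 (real n)) * (-1/3))"
    using assms by (intro powr_mono) auto
  also have "\<dots> = (real n powr (real n / log 2 (real n))) powr (-1/3)"
    by (simp add: powr_powr)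
  also have "\<dots> = 2 powr (- real n / 3)"
    using powr_div_log2_self[OF assms(1)] by (simp add: powr_powr)
  finally show ?thesis .
qed

lemma mod_tests_fail_le:
  assumes "2 \<le> n" "p1 < 1/2" "1 - p1 \<le> a1 x" "a1 x \<le> 1" "p2 < 1/2" "1 - p2 \<le> a2 x" "a2 x \<le> 1"
  shows "pmf (run_tests (mod_tests n p1 p2 a1 a2 x)) False
    \<le> real n powr -8 + (2 + log 2 (real n)) * real n powr -4"
proof -
  have phase: "pmf (maj_test (phase_size n p2 i) (a2 x)) False \<le> real n powr -4" if "1 \<le> i" for i
  proof -
    have "pmf (maj_test (phase_size n p2 i) (a2 x)) False \<le> real n powr - (2 ^ Suc i)"
      using assms phase_size_ge by (intro pmf_maj_test_False_le_powr[where q = p2]) auto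
    also have "\<dots> \<le> real n powr -4"
    proof -
      have "(2::real) ^ 2 \<le> 2 ^ Suc i" using that by (intro power_increasing) auto
      then show ?thesis using assms by (intro powr_mono) auto
    qed
    finally show ?thesis .
  qed
  have prelim: "pmf (maj_test (prelim_size n p1) (a1 x)) False \<le> real n powr -8"
    using assms prelim_size_ge by (intro pmf_maj_test_False_le_powr[where q = p1]) auto
  have "pmf (run_tests (mod_tests n p1 p2 a1 a2 x)) False
      \<le> pmf (maj_test (prelim_size n p1) (a1 x)) False
        + (\<Sum>i\<leftarrow>[1..<eta n + 1]. pmf (maj_test (phase_size n p2 i) (a2 x)) False)"
    using pmf_run_tests_False_le[of "mod_tests n p1 p2 a1 a2 x"]
    by (simp add: mod_tests_def o_def del: run_tests.simps upt_Suc)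
  also have "\<dots> \<le> real n powr -8 + (\<Sum>i\<leftarrow>[1..<eta n + 1]. real n powr -4)"
    using prelim phase by (intro add_mono sum_list_mono) auto
  also have "\<dots> \<le> real n powr -8 + (2 + log 2 (real n)) * real n powr -4"
    using eta_le[OF assms(1)] by (simp add: sum_list_triv mult_right_mono)
  finally show ?thesis .
qed

lemma mod_tests_pass_le:
  assumes "2 \<le> n" "0 \<le> a2 x" "a2 x \<le> p2" "p2 < 1/2"
  shows "pmf (run_tests (mod_tests n p1 p2 a1 a2 x)) True \<le> 2 powr (-4 * real n)"
proof -
  define M where "M = real n / log 2 (real n)"
  have "pmf (run_tests (mod_tests n p1 p2 a1 a2 x)) True
      \<le> pmf (maj_test (phase_size n p2 (eta n)) (a2 x)) True"
    by (rule pmf_run_tests_True_le) (auto simp: mod_tests_def eta_def)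
  also have "\<dots> \<le> real n powr - (2 ^ Suc (eta n))"
    using assms phase_size_ge by (intro pmf_maj_test_True_le_powr) auto
  also have "\<dots> \<le> real n powr - (4 * M)"
    using assms two_pow_eta_ge[OF assms(1)] unfolding M_def by (intro powr_mono) auto
  also have "\<dots> = (real n powr M) powr -4"
    by (simp add: powr_powr mult.commute)
  also have "\<dots> = 2 powr (-4 * real n)"
    using powr_div_log2_self[OF assms(1)] unfolding M_def by (simp add: powr_powr mult.commute)
  finally show ?thesis .
qed

lemma mod_multi_phase_failure_le:
  assumes "2 \<le> n" and m: "real (length xs) = real n / log 2 (real n)" and "distinct xs"
    and "p1 < 1/2" "p2 < 1/2"
    and bounds: "\<forall>x\<in>set xs. 0 \<le> a1 x \<and> a1 x \<le> 1 \<and> 0 \<le> a2 x \<and> a2 x \<le> 1"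
    and a1_good: "\<forall>x\<in>Sminus (1/6) (set xs). 1 - p1 \<le> a1 x"
    and a2_good: "\<forall>x\<in>Sminus (1/3) (set xs). 1 - p2 \<le> a2 x"
    and a2_bad: "\<forall>x\<in>Splus (3/4) (set xs). a2 x \<le> p2"
    and large: "real n powr -8 + (2 + log 2 (real n)) * real n powr -4 \<le> real n powr -2"
  shows "1 - measure_pmf.prob (multi_phase (mod_tests n p1 p2 a1 a2) xs) (Some ` Sminus (3/4) (set xs))
    \<le> real n * 2 powr (-4 * real n) + 2 powr (- real n / 3)"
proof -
  define A where "A = Sminus (3/4) (set xs)"
  define G where "G = Sminus (1/6) (set xs)"
  have "G \<subseteq> A" unfolding A_def G_def by (rule Sminus_mono) simp
  have "G \<subseteq> set xs" unfolding G_def Sminus_def by auto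
  have "real (length xs) / 6 \<le> real (card G)"
    using card_Sminus[of "set xs" "1/6"] distinct_card[OF \<open>distinct xs\<close>]
    unfolding G_def by (simp add: min_def) linarith
  have "1 - measure_pmf.prob (multi_phase (mod_tests n p1 p2 a1 a2) xs) (Some ` A)
      \<le> real (length xs) * 2 powr (-4 * real n) + (real n powr -2) ^ card G"
  proof (rule multi_phase_failure_le_uniform)
    fix x assume "x \<in> set xs - A"
    then show "pmf (run_tests (mod_tests n p1 p2 a1 a2 x)) True \<le> 2 powr (-4 * real n)"
      using a2_bad bounds assms unfolding A_def Splus_def by (intro mod_tests_pass_le) auto
  next
    fix x assume "x \<in> G"
    then show "pmf (run_tests (mod_tests n p1 p2 a1 a2 x)) False \<le> real n powr -2"
      using a1_good a2_good bounds assms \<open>G \<subseteq> set xs\<close> Sminus_mono[of "1/6" "1/3" "set xs"]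
      unfolding G_def by (intro order_trans[OF mod_tests_fail_le]) auto
  qed (use \<open>distinct xs\<close> \<open>G \<subseteq> A\<close> \<open>G \<subseteq> set xs\<close> in auto)
  also have "\<dots> \<le> real n * 2 powr (-4 * real n) + 2 powr (- real n / 3)"
  proof (intro add_mono mult_right_mono powr_neg2_pow_le)
    show "real (length xs) \<le> real n" using m \<open>2 \<le> n\<close> by (simp add: divide_le_eq)
  qed (use m \<open>2 \<le> n\<close> \<open>real (length xs) / 6 \<le> real (card G)\<close> in auto)
  finally show ?thesis unfolding A_def .
qed

theorem lemma16:
  fixes p1 p2 :: real
  assumes "0 \<le> p1" "p1 < 1/2" "0 \<le> p2" "p2 < 1/2"
  shows "\<exists>N::nat. \<forall>n\<ge>N. \<forall>(xs :: 'a::linorder list) (a1 :: 'a \<Rightarrow> real) (a2 :: 'a \<Rightarrow> real) (m :: nat).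
     n \<ge> 2 \<longrightarrow> real m = real n / log 2 (real n) \<longrightarrow>
     distinct xs \<longrightarrow> length xs = m \<longrightarrow>
     (\<forall>x\<in>set xs. 0 \<le> a1 x \<and> a1 x \<le> 1 \<and> 0 \<le> a2 x \<and> a2 x \<le> 1) \<longrightarrow>
     (\<forall>x\<in>Sminus (1/6) (set xs). a1 x \<ge> 1 - p1) \<longrightarrow>
     (\<forall>x\<in>Splus (1/3) (set xs). a1 x \<le> p1) \<longrightarrow>
     (\<forall>x\<in>Sminus (1/3) (set xs). a2 x \<ge> 1 - p2) \<longrightarrow>
     (\<forall>x\<in>Splus (3/4) (set xs). a2 x \<le> p2) \<longrightarrow>
     measure_pmf.prob (multi_phase (mod_tests n p1 p2 a1 a2) xs) (Some ` Sminus (3/4) (set xs))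
       \<ge> 1 - 2 powr (- real n / 5)"
proof -
  have "\<forall>\<^sub>F n in at_top. real n powr -8 + (2 + log 2 (real n)) * real n powr -4 \<le> real n powr -2"
    and "\<forall>\<^sub>F n in at_top. real n * 2 powr (-4 * real n) + 2 powr (- real n / 3) \<le> 2 powr (- real n / 5)"
    by real_asymp+
  from eventually_conj[OF this] obtain N where large:
    "\<And>n. N \<le> n \<Longrightarrow> real n powr -8 + (2 + log 2 (real n)) * real n powr -4 \<le> real n powr -2
      \<and> real n * 2 powr (-4 * real n) + 2 powr (- real n / 3) \<le> 2 powr (- real n / 5)"
    unfolding eventually_at_top_linorder by blast
  show ?thesis
  proof (intro exI allI impI)
    fix n m :: nat and xs :: "'a list" and a1 a2 :: "'a \<Rightarrow> real"
    assume "N \<le> n" "2 \<le> n" "real m = real n / log 2 (real n)" "distinct xs" "length xs = m"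
      "\<forall>x\<in>set xs. 0 \<le> a1 x \<and> a1 x \<le> 1 \<and> 0 \<le> a2 x \<and> a2 x \<le> 1"
      "\<forall>x\<in>Sminus (1/6) (set xs). a1 x \<ge> 1 - p1" "\<forall>x\<in>Splus (1/3) (set xs). a1 x \<le> p1"
      "\<forall>x\<in>Sminus (1/3) (set xs). a2 x \<ge> 1 - p2" "\<forall>x\<in>Splus (3/4) (set xs). a2 x \<le> p2"
    then have "1 - measure_pmf.prob (multi_phase (mod_tests n p1 p2 a1 a2) xs) (Some ` Sminus (3/4) (set xs))
        \<le> real n * 2 powr (-4 * real n) + 2 powr (- real n / 3)"
      using assms large by (intro mod_multi_phase_failure_le) auto
    with large[OF \<open>N \<le> n\<close>]
    show "measure_pmf.prob (multi_phase (mod_tests n p1 p2 a1 a2) xs) (Some ` Sminus (3/4) (set xs))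
        \<ge> 1 - 2 powr (- real n / 5)" by linarith
  qed
qed

end
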